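(* The Sorgenfrey line $\mathbb S$ is strongly discrete homogeneous.
   Context: The Sorgenfrey line is $\mathbb R$ with the topology generated by half-open intervals $[a,b)$. A subset $D$ of $X$ is discrete if each point of $X$ has a neighbourhood containing at most one point of $D$. A Hausdorff space $X$ is strongly discrete homogeneous (sDH) if for any two discrete subsets $A,B$ of $X$ and any bijection $f\colon A\to B$, $f$ extends to a homeomorphism of $X$ onto itself. *)

theory Defs
  imports "HOL-Analysis.Analysis"
begin

definition sorgenfrey_line :: "real topology" where
  "sorgenfrey_line = topology_generated_by {{a..<b} | a b :: real. a < b}"

definition discrete_subset :: "'a topology \<Rightarrow> 'a set \<Rightarrow> bool" where
  "discrete_subset X D \<longleftrightarrow> D \<subseteq> topspace X \<and>
     (\<forall>x\<in>topspace X. \<exists>U. openin X U \<and> x \<in> U \<and>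
        (\<forall>y\<in>U \<inter> D. \<forall>z\<in>U \<inter> D. y = z))"

definition sDH :: "'a topology \<Rightarrow> bool" where
  "sDH X \<longleftrightarrow> Hausdorff_space X \<and>
     (\<forall>A B f. discrete_subset X A \<and> discrete_subset X B \<and> bij_betw f A B \<longrightarrow>
        (\<exists>h. homeomorphic_map X X h \<and> (\<forall>x\<in>A. h x = f x)))"

end

(* A discrete subset A of the Sorgenfrey line leaves, to the right of every real x, a gap
   (x, x + e) free of A.  The closure C of A \<union> \<int> inherits these gaps, so C is countable,
   every c \<in> C has a successor in C, and the intervals [c, successor c) partition the reals.
   Halving them gives countably many half-open pieces: those starting at the points of A and
   infinitely many others.  Given discrete A, B and a bijection f between them, pair the
   pieces of the two partitions by a bijection sending the piece starting at a to the piece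
   starting at f a, and map each piece affinely onto its partner.  This map and its inverse
   are affine with positive slope just to the right of every point, hence open maps of the
   Sorgenfrey line, so the map is a homeomorphism extending f. *)

theory Submission
  imports Defs
begin

lemma topspace_sorgenfrey_line [simp]: "topspace sorgenfrey_line = UNIV"
proof -
  have "x \<in> \<Union>{{a..<b} | a b :: real. a < b}" for x :: real
    by (intro UnionI[of "{x..<x+1}"] CollectI exI[of _ x] exI[of _ "x+1"]) auto
  then show ?thesis
    unfolding sorgenfrey_line_def by auto
qed

lemma openin_sorgenfrey_line:
  "openin sorgenfrey_line U \<longleftrightarrow> (\<forall>x\<in>U. \<exists>e>0. {x..<x+e} \<subseteq> U)"
proof
  assume "openin sorgenfrey_line U"
  then have "generate_topology_on {{a..<b} | a b :: real. a < b} U"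
    unfolding sorgenfrey_line_def by (rule openin_topology_generated_by)
  then show "\<forall>x\<in>U. \<exists>e>0. {x..<x+e} \<subseteq> U"
  proof (induction rule: generate_topology_on.induct)
    case (Int U V)
    show ?case
    proof
      fix x assume "x \<in> U \<inter> V"
      then obtain d e where "d > 0" "{x..<x+d} \<subseteq> U" "e > 0" "{x..<x+e} \<subseteq> V"
        using Int.IH by blast
      moreover have "{x..<x + min d e} \<subseteq> {x..<x+d} \<inter> {x..<x+e}"
        by auto
      ultimately show "\<exists>e>0. {x..<x+e} \<subseteq> U \<inter> V"
        by (intro exI[of _ "min d e"] conjI) (simp, blast)
    qed
  next
    case (Basis s)
    then obtain a b where "s = {a..<b}" by blast
    then show ?case
      by (auto intro!: exI[of _ "b - _"])
  qed blast+
next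
  assume "\<forall>x\<in>U. \<exists>e>0. {x..<x+e} \<subseteq> U"
  then obtain e where e: "\<And>x. x \<in> U \<Longrightarrow> e x > 0 \<and> {x..<x + e x} \<subseteq> U"
    by metis
  then have "U = (\<Union>x\<in>U. {x..<x + e x})"
    by fastforce
  moreover have "generate_topology_on {{a..<b} | a b :: real. a < b} (\<Union>x\<in>U. {x..<x + e x})"
    using e by (intro generate_topology_on.UN) (force intro: generate_topology_on.Basis)
  ultimately show "openin sorgenfrey_line U"
    unfolding sorgenfrey_line_def by (simp add: openin_topology_generated_by_iff)
qed

lemma openin_sorgenfrey_atLeastLessThan: "openin sorgenfrey_line {a..<b}"
  unfolding openin_sorgenfrey_line by (auto intro!: exI[of _ "b - _"])

lemma Hausdorff_space_sorgenfrey_line: "Hausdorff_space sorgenfrey_line"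
proof -
  have "\<exists>U V. openin sorgenfrey_line U \<and> openin sorgenfrey_line V \<and> x \<in> U \<and> y \<in> V \<and> disjnt U V"
    if "x < y" for x y :: real
    using that
    by (intro exI[of _ "{x..<y}"] exI[of _ "{y..<y+1}"])
       (auto simp: openin_sorgenfrey_atLeastLessThan disjnt_def)
  then show ?thesis
    unfolding Hausdorff_space_def by (metis linorder_neqE_linordered_idom disjnt_sym)
qed

definition right_affine_at :: "(real \<Rightarrow> real) \<Rightarrow> real \<Rightarrow> bool" where
  "right_affine_at f x \<longleftrightarrow> (\<exists>e>0. \<exists>c>0. \<forall>y\<in>{x..<x+e}. f y = f x + c * (y - x))"

lemma open_map_sorgenfrey_if_right_affine:
  assumes "\<And>x. right_affine_at f x"
  shows "open_map sorgenfrey_line sorgenfrey_line f"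
  unfolding open_map_def openin_sorgenfrey_line
proof (intro allI impI ballI)
  fix U y
  assume U: "\<forall>x\<in>U. \<exists>e>0. {x..<x+e} \<subseteq> U" and "y \<in> f ` U"
  then obtain x where x: "x \<in> U" "y = f x" by blast
  obtain d where d: "d > 0" "{x..<x+d} \<subseteq> U" using U x by blast
  obtain e c where e: "e > 0" "c > 0" and affine: "\<And>z. z \<in> {x..<x+e} \<Longrightarrow> f z = f x + c * (z - x)"
    using assms unfolding right_affine_at_def by blast
  have "{y..<y + c * min d e} \<subseteq> f ` U"
  proof
    fix z assume z: "z \<in> {y..<y + c * min d e}"
    define w where "w = x + (z - y) / c"
    have "x \<le> w" "w < x + min d e"
      using z e unfolding w_def by (auto simp: field_simps)
    then have "w \<in> U" "f w = z"
      using d affine[of w] e unfolding w_def x(2) by auto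
    then show "z \<in> f ` U" by blast
  qed
  then show "\<exists>e>0. {y..<y+e} \<subseteq> f ` U"
    using d e by (intro exI[of _ "c * min d e"]) auto
qed

lemma homeomorphic_map_sorgenfrey_if_right_affine:
  assumes gf: "\<And>x. g (f x) = x" and fg: "\<And>y. f (g y) = y"
    and "\<And>x. right_affine_at f x" "\<And>y. right_affine_at g y"
  shows "homeomorphic_map sorgenfrey_line sorgenfrey_line f"
proof (rule bijective_open_imp_homeomorphic_map)
  show "open_map sorgenfrey_line sorgenfrey_line f"
    using assms(3) by (rule open_map_sorgenfrey_if_right_affine)
  show "continuous_map sorgenfrey_line sorgenfrey_line f"
    using open_eq_continuous_inverse_map[of sorgenfrey_line g sorgenfrey_line f]
      open_map_sorgenfrey_if_right_affine[OF assms(4)] gf fg by simp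
  show "f ` topspace sorgenfrey_line = topspace sorgenfrey_line"
    using fg by (metis surj_def topspace_sorgenfrey_line)
  show "inj_on f (topspace sorgenfrey_line)"
    using gf by (metis inj_on_inverseI)
qed

section \<open>Piecewise affine homeomorphisms\<close>

definition affine_rescale :: "real \<Rightarrow> real \<Rightarrow> real \<Rightarrow> real \<Rightarrow> real \<Rightarrow> real" where
  "affine_rescale a b c d x = c + (x - a) * (d - c) / (b - a)"

lemma affine_rescale_bounds:
  assumes "a \<le> x" "x < b" "c < d"
  shows "c \<le> affine_rescale a b c d x" "affine_rescale a b c d x < d"
proof -
  have "(x - a) * (d - c) < (d - c) * (b - a)"
    using assms by (simp add: mult.commute)
  then have "(x - a) * (d - c) / (b - a) < d - c"
    using assms by (simp add: pos_divide_less_eq)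
  then show "affine_rescale a b c d x < d"
    unfolding affine_rescale_def by simp
qed (use assms in \<open>simp add: affine_rescale_def\<close>)

lemma affine_rescale_inverse:
  assumes "a < b" "c < d"
  shows "affine_rescale c d a b (affine_rescale a b c d x) = x"
  using assms by (simp add: affine_rescale_def)

lemma affine_rescale_shift:
  "affine_rescale a b c d y = affine_rescale a b c d x + (d - c) / (b - a) * (y - x)"
  unfolding affine_rescale_def by (simp add: algebra_simps add_divide_distrib[symmetric])

definition interval_partition :: "'k set \<Rightarrow> ('k \<Rightarrow> real) \<Rightarrow> ('k \<Rightarrow> real) \<Rightarrow> bool" where
  "interval_partition K l r \<longleftrightarrow>
     (\<forall>k\<in>K. l k < r k) \<and> (\<forall>x. \<exists>!k\<in>K. l k \<le> x \<and> x < r k)"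

definition partition_index :: "'k set \<Rightarrow> ('k \<Rightarrow> real) \<Rightarrow> ('k \<Rightarrow> real) \<Rightarrow> real \<Rightarrow> 'k" where
  "partition_index K l r x = (THE k. k \<in> K \<and> l k \<le> x \<and> x < r k)"

definition piecewise_affine ::
    "'k set \<Rightarrow> ('k \<Rightarrow> real) \<Rightarrow> ('k \<Rightarrow> real) \<Rightarrow> ('k \<Rightarrow> real) \<Rightarrow> ('k \<Rightarrow> real) \<Rightarrow> real \<Rightarrow> real" where
  "piecewise_affine K l1 r1 l2 r2 x =
     (let k = partition_index K l1 r1 x in affine_rescale (l1 k) (r1 k) (l2 k) (r2 k) x)"

lemma interval_partition_less:
  "interval_partition K l r \<Longrightarrow> k \<in> K \<Longrightarrow> l k < r k"
  unfolding interval_partition_def by blast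

lemma interval_partition_reindex:
  assumes "interval_partition K' l r" and "bij_betw \<sigma> K K'"
  shows "interval_partition K (l \<circ> \<sigma>) (r \<circ> \<sigma>)"
proof -
  have "\<exists>!k\<in>K. l (\<sigma> k) \<le> x \<and> x < r (\<sigma> k)" for x
  proof -
    have "\<exists>!k'\<in>K'. l k' \<le> x \<and> x < r k'"
      using assms(1) unfolding interval_partition_def by blast
    then show ?thesis
      using assms(2) unfolding bij_betw_def inj_on_def by blast
  qed
  moreover have "\<forall>k\<in>K. l (\<sigma> k) < r (\<sigma> k)"
    using assms by (metis bij_betwE interval_partition_less)
  ultimately show ?thesis
    unfolding interval_partition_def by simp
qed

lemma partition_index:
  assumes "interval_partition K l r"
  shows "partition_index K l r x \<in> K" "l (partition_index K l r x) \<le> x" "x < r (partition_index K l r x)"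
proof -
  have "\<exists>!k. k \<in> K \<and> l k \<le> x \<and> x < r k"
    using assms unfolding interval_partition_def by blast
  then show "partition_index K l r x \<in> K" "l (partition_index K l r x) \<le> x" "x < r (partition_index K l r x)"
    unfolding partition_index_def by (metis (mono_tags, lifting) theI')+
qed

lemma partition_index_eq:
  assumes "interval_partition K l r" "k \<in> K" "l k \<le> x" "x < r k"
  shows "partition_index K l r x = k"
proof -
  have "\<exists>!k. k \<in> K \<and> l k \<le> x \<and> x < r k"
    using assms unfolding interval_partition_def by blast
  then show ?thesis
    unfolding partition_index_def using assms by (intro the1_equality) auto
qed

lemma piecewise_affine_eq:
  assumes "interval_partition K l1 r1" "k \<in> K" "l1 k \<le> x" "x < r1 k"
  shows "piecewise_affine K l1 r1 l2 r2 x = affine_rescale (l1 k) (r1 k) (l2 k) (r2 k) x"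
  unfolding piecewise_affine_def partition_index_eq[OF assms] by simp

lemma piecewise_affine_inverse:
  assumes "interval_partition K l1 r1" "interval_partition K l2 r2"
  shows "piecewise_affine K l2 r2 l1 r1 (piecewise_affine K l1 r1 l2 r2 x) = x"
proof -
  define k where "k = partition_index K l1 r1 x"
  have k: "k \<in> K" "l1 k \<le> x" "x < r1 k"
    using partition_index[OF assms(1)] unfolding k_def by auto
  have less: "l1 k < r1 k" "l2 k < r2 k"
    using k(1) assms by (auto intro: interval_partition_less)
  have eq: "piecewise_affine K l1 r1 l2 r2 x = affine_rescale (l1 k) (r1 k) (l2 k) (r2 k) x"
    by (rule piecewise_affine_eq[OF assms(1) k])
  have "l2 k \<le> piecewise_affine K l1 r1 l2 r2 x" "piecewise_affine K l1 r1 l2 r2 x < r2 k"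
    unfolding eq using k(2,3) less(2) by (rule affine_rescale_bounds)+
  then have "piecewise_affine K l2 r2 l1 r1 (piecewise_affine K l1 r1 l2 r2 x) =
      affine_rescale (l2 k) (r2 k) (l1 k) (r1 k) (piecewise_affine K l1 r1 l2 r2 x)"
    by (rule piecewise_affine_eq[OF assms(2) k(1)])
  also have "\<dots> = x"
    unfolding eq by (rule affine_rescale_inverse[OF less])
  finally show ?thesis .
qed

lemma right_affine_at_piecewise_affine:
  assumes "interval_partition K l1 r1" "interval_partition K l2 r2"
  shows "right_affine_at (piecewise_affine K l1 r1 l2 r2) x"
proof -
  define k where "k = partition_index K l1 r1 x"
  have k: "k \<in> K" "l1 k \<le> x" "x < r1 k"
    using partition_index[OF assms(1)] unfolding k_def by auto
  have "l1 k < r1 k" "l2 k < r2 k"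
    using k(1) assms by (auto intro: interval_partition_less)
  then have slope: "0 < (r2 k - l2 k) / (r1 k - l1 k)"
    by simp
  have shift: "piecewise_affine K l1 r1 l2 r2 y =
      piecewise_affine K l1 r1 l2 r2 x + (r2 k - l2 k) / (r1 k - l1 k) * (y - x)"
    if "y \<in> {x..<x + (r1 k - x)}" for y
  proof -
    have "l1 k \<le> y" "y < r1 k"
      using that k by auto
    then have "piecewise_affine K l1 r1 l2 r2 y = affine_rescale (l1 k) (r1 k) (l2 k) (r2 k) y"
      by (rule piecewise_affine_eq[OF assms(1) k(1)])
    also have "\<dots> = affine_rescale (l1 k) (r1 k) (l2 k) (r2 k) x + (r2 k - l2 k) / (r1 k - l1 k) * (y - x)"
      by (rule affine_rescale_shift)
    also have "affine_rescale (l1 k) (r1 k) (l2 k) (r2 k) x = piecewise_affine K l1 r1 l2 r2 x"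
      by (rule piecewise_affine_eq[OF assms(1) k, symmetric])
    finally show ?thesis .
  qed
  have "0 < r1 k - x"
    using k(3) by simp
  then show ?thesis
    unfolding right_affine_at_def using slope shift by blast
qed

lemma homeomorphic_map_piecewise_affine:
  assumes "interval_partition K l1 r1" "interval_partition K l2 r2"
  shows "homeomorphic_map sorgenfrey_line sorgenfrey_line (piecewise_affine K l1 r1 l2 r2)"
proof (rule homeomorphic_map_sorgenfrey_if_right_affine)
  show "piecewise_affine K l2 r2 l1 r1 (piecewise_affine K l1 r1 l2 r2 x) = x" for x
    using assms by (rule piecewise_affine_inverse)
  show "piecewise_affine K l1 r1 l2 r2 (piecewise_affine K l2 r2 l1 r1 y) = y" for y
    using assms(2,1) by (rule piecewise_affine_inverse)
  show "right_affine_at (piecewise_affine K l1 r1 l2 r2) x" for x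
    using assms by (rule right_affine_at_piecewise_affine)
  show "right_affine_at (piecewise_affine K l2 r2 l1 r1) y" for y
    using assms(2,1) by (rule right_affine_at_piecewise_affine)
qed

lemma piecewise_affine_left_endpoint:
  assumes "interval_partition K l1 r1" "k \<in> K"
  shows "piecewise_affine K l1 r1 l2 r2 (l1 k) = l2 k"
  using assms piecewise_affine_eq[OF assms] interval_partition_less[OF assms]
  by (simp add: affine_rescale_def)

lemma interval_partitions_homeomorphic:
  assumes "interval_partition K l r" "interval_partition K' l' r'" "bij_betw \<sigma> K K'"
  obtains h where "homeomorphic_map sorgenfrey_line sorgenfrey_line h"
    "\<And>k. k \<in> K \<Longrightarrow> h (l k) = l' (\<sigma> k)"
proof
  have "interval_partition K (l' \<circ> \<sigma>) (r' \<circ> \<sigma>)"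
    using assms(2,3) by (rule interval_partition_reindex)
  then show "homeomorphic_map sorgenfrey_line sorgenfrey_line (piecewise_affine K l r (l' \<circ> \<sigma>) (r' \<circ> \<sigma>))"
    using assms(1) by (simp add: homeomorphic_map_piecewise_affine)
  show "piecewise_affine K l r (l' \<circ> \<sigma>) (r' \<circ> \<sigma>) (l k) = l' (\<sigma> k)" if "k \<in> K" for k
    using assms(1) that by (simp add: piecewise_affine_left_endpoint)
qed

section \<open>Successor partitions\<close>

locale right_isolated_grid =
  fixes C :: "real set"
  assumes closed: "closed C"
    and Ints_subset: "\<int> \<subseteq> C"
    and right_isolated: "\<And>x. \<exists>e>0. {x<..<x+e} \<inter> C = {}"
begin

definition successor :: "real \<Rightarrow> real" where
  "successor c = Inf (C \<inter> {c<..})"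

lemma
  shows successor_in: "successor c \<in> C"
    and less_successor: "c < successor c"
    and successor_le: "\<And>y. y \<in> C \<Longrightarrow> c < y \<Longrightarrow> successor c \<le> y"
proof -
  obtain e where e: "e > 0" "{c<..<c+e} \<inter> C = {}"
    using right_isolated by blast
  define S where "S = C \<inter> {c+e..}"
  have "C \<inter> {c<..} = S"
    unfolding S_def using e by force
  then have successor_S: "successor c = Inf S"
    unfolding successor_def by simp
  have "of_int (\<lfloor>c+e\<rfloor> + 1) \<in> S"
    unfolding S_def using Ints_subset by auto
  moreover have bdd: "bdd_below S"
    unfolding S_def by (rule bdd_belowI[of _ "c+e"]) auto
  moreover have "closed S"
    unfolding S_def using closed by (simp add: closed_Int)
  ultimately have "Inf S \<in> S"
    by (intro closed_contains_Inf) auto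
  then show "successor c \<in> C" "c < successor c"
    unfolding successor_S S_def using e by auto
  fix y assume "y \<in> C" "c < y"
  then have "y \<in> S"
    using \<open>C \<inter> {c<..} = S\<close> by blast
  then show "successor c \<le> y"
    unfolding successor_S using bdd by (rule cInf_lower)
qed

lemma ex1_successor_interval: "\<exists>!c\<in>C. c \<le> x \<and> x < successor c"
proof -
  define T where "T = C \<inter> {..x}"
  have "of_int \<lfloor>x\<rfloor> \<in> T"
    unfolding T_def using Ints_subset by auto
  moreover have bdd: "bdd_above T"
    unfolding T_def by (rule bdd_aboveI[of _ x]) auto
  moreover have "closed T"
    unfolding T_def using closed by (simp add: closed_Int)
  ultimately have "Sup T \<in> T"
    by (intro closed_contains_Sup) auto
  moreover have "x < successor (Sup T)"
  proof (rule ccontr)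
    assume "\<not> x < successor (Sup T)"
    then have "successor (Sup T) \<in> T"
      unfolding T_def using successor_in by auto
    then have "successor (Sup T) \<le> Sup T"
      using bdd by (rule cSup_upper)
    then show False
      using less_successor[of "Sup T"] by simp
  qed
  moreover have "c = d"
    if "c \<in> C" "c \<le> x" "x < successor c" "d \<in> C" "d \<le> x" "x < successor d" for c d
    using that successor_le[of c d] successor_le[of d c] by (cases c d rule: linorder_cases) auto
  ultimately show ?thesis
    unfolding T_def by blast
qed

lemma countable: "countable C"
proof -
  have "\<forall>c\<in>C. \<exists>r\<in>\<rat>. c < r \<and> r < successor c"
    using less_successor Rats_dense_in_real by blast
  then obtain q where q: "\<And>c. c \<in> C \<Longrightarrow> q c \<in> \<rat> \<and> c < q c \<and> q c < successor c"
    by metis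
  have "inj_on q C"
  proof (rule linorder_inj_onI)
    fix c d assume "c < d" "c \<in> C" "d \<in> C"
    then have "q c < successor c" "successor c \<le> d" "d < q d"
      using q successor_le[of d c] by auto
    then show "q c \<noteq> q d"
      by simp
  qed auto
  moreover have "q ` C \<subseteq> \<rat>"
    using q by blast
  ultimately show ?thesis
    using countable_rat countable_subset countable_image_inj_on by metis
qed

lemma infinite: "infinite C"
proof
  assume "finite C"
  then have "finite (range (of_int :: int \<Rightarrow> real))"
    using Ints_subset unfolding Ints_def by (rule finite_subset[rotated])
  then show False
    using finite_imageD[of "of_int :: int \<Rightarrow> real" UNIV] by (simp add: inj_on_def)
qed

(* Halving every interval guarantees infinitely many pieces that do not start at a
   prescribed point of C. *)
definition half_left :: "real \<times> bool \<Rightarrow> real" where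
  "half_left k = (if snd k then fst k else (fst k + successor (fst k)) / 2)"

definition half_right :: "real \<times> bool \<Rightarrow> real" where
  "half_right k = (if snd k then (fst k + successor (fst k)) / 2 else successor (fst k))"

lemma interval_partition_halves: "interval_partition (C \<times> UNIV) half_left half_right"
  unfolding interval_partition_def
proof (intro conjI ballI allI)
  fix k :: "real \<times> bool"
  show "half_left k < half_right k"
    using less_successor[of "fst k"] unfolding half_left_def half_right_def by auto
next
  fix x
  have "half_left k \<le> x \<and> x < half_right k \<longleftrightarrow>
      fst k \<le> x \<and> x < successor (fst k) \<and> snd k = (x < (fst k + successor (fst k)) / 2)" for k
    using less_successor[of "fst k"] unfolding half_left_def half_right_def by auto
  then show "\<exists>!k\<in>C \<times> UNIV. half_left k \<le> x \<and> x < half_right k"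
    using ex1_successor_interval[of x] by (simp add: Ex1_def) metis
qed

end

section \<open>Discrete subsets of the Sorgenfrey line\<close>

lemma discrete_subset_sorgenfrey_right_isolated:
  assumes "discrete_subset sorgenfrey_line A"
  obtains e where "e > 0" "{x<..<x+e} \<inter> A = {}"
proof -
  have "\<exists>U. openin sorgenfrey_line U \<and> x \<in> U \<and> (\<forall>y\<in>U \<inter> A. \<forall>z\<in>U \<inter> A. y = z)"
    using assms unfolding discrete_subset_def by simp
  then obtain U where U: "openin sorgenfrey_line U" "x \<in> U" "\<And>y z. y \<in> U \<inter> A \<Longrightarrow> z \<in> U \<inter> A \<Longrightarrow> y = z"
    by blast
  obtain d where d: "d > 0" "{x..<x+d} \<subseteq> U"
    using U(1,2) unfolding openin_sorgenfrey_line by blast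
  show thesis
  proof (cases "{x<..<x+d} \<inter> A = {}")
    case False
    then obtain z where z: "z \<in> A" "x < z" "z < x + d" by auto
    have "{x<..<x + (z - x)} \<inter> A = {}"
    proof (intro equals0I)
      fix y assume "y \<in> {x<..<x + (z - x)} \<inter> A"
      then have "y \<in> U \<inter> A" "z \<in> U \<inter> A" "y < z"
        using z d by auto
      then show False
        using U(3) by blast
    qed
    then show thesis
      using z(2) by (intro that[of "z - x"]) auto
  qed (use d that in blast)
qed

lemma right_isolated_grid_closure:
  assumes "discrete_subset sorgenfrey_line A"
  shows "right_isolated_grid (closure (A \<union> \<int>))"
proof
  show "\<exists>e>0. {x<..<x+e} \<inter> closure (A \<union> \<int>) = {}" for x
  proof -
    obtain e where e: "e > 0" "{x<..<x+e} \<inter> A = {}"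
      using assms by (rule discrete_subset_sorgenfrey_right_isolated)
    define e' where "e' = min e (of_int \<lfloor>x\<rfloor> + 1 - x)"
    have "{x<..<x+e'} \<inter> \<int> = {}"
    proof (intro equals0I)
      fix y assume "y \<in> {x<..<x+e'} \<inter> \<int>"
      then obtain n where "x < of_int n" "of_int n < (of_int \<lfloor>x\<rfloor> + 1 :: real)"
        unfolding e'_def by (auto elim!: Ints_cases)
      then have "\<lfloor>x\<rfloor> < n" "n < \<lfloor>x\<rfloor> + 1"
        by (metis floor_less_iff, metis of_int_1 of_int_add of_int_less_iff)
      then show False
        by linarith
    qed
    moreover have "{x<..<x+e'} \<subseteq> {x<..<x+e}"
      unfolding e'_def by auto
    ultimately have "{x<..<x+e'} \<inter> (A \<union> \<int>) = {}"
      using e(2) by blast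
    then have "{x<..<x+e'} \<inter> closure (A \<union> \<int>) = {}"
      by (simp only: open_Int_closure_eq_empty open_greaterThanLessThan)
    moreover have "e' > 0"
      unfolding e'_def using e(1) by linarith
    ultimately show ?thesis
      by blast
  qed
qed (use closure_subset in auto)

lemma discrete_subset_sorgenfrey_partition:
  assumes "discrete_subset sorgenfrey_line A"
  obtains K :: "(real \<times> bool) set" and l r
  where "interval_partition K l r" "A \<times> {True} \<subseteq> K" "\<And>a. a \<in> A \<Longrightarrow> l (a, True) = a"
    "countable K" "infinite (K - A \<times> {True})"
proof -
  define C where "C = closure (A \<union> \<int>)"
  interpret grid: right_isolated_grid C
    unfolding C_def using assms by (rule right_isolated_grid_closure)
  have "A \<subseteq> C"
    unfolding C_def using closure_subset by blast
  have "C \<times> {False} \<subseteq> C \<times> UNIV - A \<times> {True}"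
    by auto
  moreover have "infinite (C \<times> {False})"
    using grid.infinite by (auto simp: finite_cartesian_product_iff)
  ultimately have "infinite (C \<times> UNIV - A \<times> {True})"
    using finite_subset by blast
  moreover have "countable (C \<times> (UNIV :: bool set))"
    using grid.countable by simp
  ultimately show thesis
    using grid.interval_partition_halves \<open>A \<subseteq> C\<close>
    by (intro that[of "C \<times> UNIV" grid.half_left grid.half_right]) (auto simp: grid.half_left_def)
qed

lemma bij_betw_extend_countably_infinite:
  assumes "bij_betw f A B" "A \<subseteq> K" "B \<subseteq> L" "countable K" "countable L"
    and "infinite (K - A)" "infinite (L - B)"
  obtains g where "bij_betw g K L" "\<And>x. x \<in> A \<Longrightarrow> g x = f x"
proof -
  have "bij_betw (from_nat_into (K - A)) UNIV (K - A)" "bij_betw (from_nat_into (L - B)) UNIV (L - B)"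
    using assms by (auto intro: bij_betw_from_nat_into)
  then obtain \<tau> where "bij_betw \<tau> (K - A) (L - B)"
    by (metis bij_betw_inv_into bij_betw_trans)
  then have "bij_betw (\<lambda>x. if x \<in> A then f x else \<tau> x) (A \<union> (K - A)) (B \<union> (L - B))"
    by (rule bij_betw_disjoint_Un[OF assms(1)]) auto
  then show thesis
    using assms(2,3) by (intro that[of "\<lambda>x. if x \<in> A then f x else \<tau> x"]) (auto simp: Un_absorb1)
qed

theorem mainTheorem7:
  shows "sDH sorgenfrey_line"
  unfolding sDH_def
proof (intro conjI allI impI Hausdorff_space_sorgenfrey_line, elim conjE)
  fix A B :: "real set" and f
  assume A: "discrete_subset sorgenfrey_line A" and B: "discrete_subset sorgenfrey_line B"
    and f: "bij_betw f A B"
  obtain KA lA rA where KA: "interval_partition KA lA rA" "A \<times> {True} \<subseteq> KA"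
      "\<And>a. a \<in> A \<Longrightarrow> lA (a, True) = a" "countable KA" "infinite (KA - A \<times> {True})"
    using discrete_subset_sorgenfrey_partition[OF A] by blast
  obtain KB lB rB where KB: "interval_partition KB lB rB" "B \<times> {True} \<subseteq> KB"
      "\<And>b. b \<in> B \<Longrightarrow> lB (b, True) = b" "countable KB" "infinite (KB - B \<times> {True})"
    using discrete_subset_sorgenfrey_partition[OF B] by blast
  have "bij_betw (map_prod f id) (A \<times> {True}) (B \<times> {True})"
    using f bij_betw_id by (rule bij_betw_map_prod)
  then obtain \<sigma> where \<sigma>: "bij_betw \<sigma> KA KB" "\<And>k. k \<in> A \<times> {True} \<Longrightarrow> \<sigma> k = map_prod f id k"
    using KA KB by (metis bij_betw_extend_countably_infinite)
  obtain h where h: "homeomorphic_map sorgenfrey_line sorgenfrey_line h" "\<And>k. k \<in> KA \<Longrightarrow> h (lA k) = lB (\<sigma> k)"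
    using interval_partitions_homeomorphic[OF KA(1) KB(1) \<sigma>(1)] by blast
  have "h a = f a" if "a \<in> A" for a
    using that h(2)[of "(a, True)"] \<sigma>(2)[of "(a, True)"] KA(2,3) KB(3) bij_betwE[OF f] by auto
  with h(1) show "\<exists>h. homeomorphic_map sorgenfrey_line sorgenfrey_line h \<and> (\<forall>x\<in>A. h x = f x)"
    by blast
qed

end
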